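(* Let $\Sigma$ be a fan with $\operatorname{ns}(\Sigma)>0$. Then no two distinct minimal non-simplicial cones of $\Sigma$ are both contained in a single cone of $\Sigma$.
   Context: For a strongly convex rational polyhedral cone $\sigma$, $\sigma(1)$ denotes its set of rays and $\dim\sigma$ the dimension of its linear span; its non-simplicial index is $\operatorname{ns}(\sigma)=|\sigma(1)|-\dim\sigma$. For a fan $\Sigma$, $\operatorname{ns}(\Sigma)=\max_{\sigma\in\Sigma}\operatorname{ns}(\sigma)$. A minimal non-simplicial cone of $\Sigma$ is a cone $\sigma\in\Sigma$ with $\operatorname{ns}(\sigma)=\operatorname{ns}(\Sigma)$ which is minimal with respect to inclusion among cones of $\Sigma$ with this property. *)

theory Defs
  imports "HOL-Analysis.Analysis"
begin

text \<open>Cones live in N_R = R^n (index type 'n), the lattice being Z^n.\<close>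

definition rat_poly_cone :: "(real ^ 'n) set \<Rightarrow> bool" where
  "rat_poly_cone \<sigma> \<longleftrightarrow>
     (\<exists>S. finite S \<and> (\<forall>v\<in>S. \<forall>i. v $ i \<in> \<int>) \<and> \<sigma> = convex_cone hull S)"

definition strongly_convex :: "(real ^ 'n) set \<Rightarrow> bool" where
  "strongly_convex \<sigma> \<longleftrightarrow> \<sigma> \<inter> uminus ` \<sigma> = {0}"

definition sc_rat_poly_cone :: "(real ^ 'n) set \<Rightarrow> bool" where
  "sc_rat_poly_cone \<sigma> \<longleftrightarrow> rat_poly_cone \<sigma> \<and> strongly_convex \<sigma>"

definition cone_face :: "(real ^ 'n) set \<Rightarrow> (real ^ 'n) set \<Rightarrow> bool" where
  "cone_face \<tau> \<sigma> \<longleftrightarrow> \<tau> face_of \<sigma> \<and> \<tau> \<noteq> {}"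

definition rays :: "(real ^ 'n) set \<Rightarrow> (real ^ 'n) set set" where
  "rays \<sigma> = {\<rho>. cone_face \<rho> \<sigma> \<and> dim \<rho> = 1}"

definition ns :: "(real ^ 'n) set \<Rightarrow> int" where
  "ns \<sigma> = int (card (rays \<sigma>)) - int (dim \<sigma>)"

definition fan :: "(real ^ 'n) set set \<Rightarrow> bool" where
  "fan \<Sigma> \<longleftrightarrow> finite \<Sigma> \<and> \<Sigma> \<noteq> {} \<and>
     (\<forall>\<sigma>\<in>\<Sigma>. sc_rat_poly_cone \<sigma>) \<and>
     (\<forall>\<sigma>\<in>\<Sigma>. \<forall>\<tau>. cone_face \<tau> \<sigma> \<longrightarrow> \<tau> \<in> \<Sigma>) \<and>
     (\<forall>\<sigma>\<in>\<Sigma>. \<forall>\<tau>\<in>\<Sigma>. cone_face (\<sigma> \<inter> \<tau>) \<sigma> \<and> cone_face (\<sigma> \<inter> \<tau>) \<tau>)"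

definition ns_fan :: "(real ^ 'n) set set \<Rightarrow> int" where
  "ns_fan \<Sigma> = Max (ns ` \<Sigma>)"

definition minimal_nonsimplicial :: "(real ^ 'n) set set \<Rightarrow> (real ^ 'n) set \<Rightarrow> bool" where
  "minimal_nonsimplicial \<Sigma> \<sigma> \<longleftrightarrow> \<sigma> \<in> \<Sigma> \<and> ns \<sigma> = ns_fan \<Sigma> \<and>
     (\<forall>\<tau>\<in>\<Sigma>. \<tau> \<subset> \<sigma> \<longrightarrow> ns \<tau> \<noteq> ns_fan \<Sigma>)"

end

theory Submission imports Defs begin

(* For a cone sigma of a fan, sigma is generated by its rays, so
   dim sigma = dim (union of its rays) and ns sigma is the "excess"
   card F - dim (union F) of the finite family F = rays sigma of sets of
   dimension at most one.  By Grassmann's dimension inequality the excess is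
   supermodular on families A, B contained in a family C:
     excess (A \<inter> B) \<ge> excess A + excess B - excess C.
   If two minimal non-simplicial cones sigma1, sigma2 lie in a cone tau of the fan,
   they are faces of tau, sigma1 \<inter> sigma2 is a cone of the fan whose rays are the
   common rays, and supermodularity gives ns (sigma1 \<inter> sigma2) \<ge> ns sigma1 +
   ns sigma2 - ns tau \<ge> ns_fan.  Hence sigma1 \<inter> sigma2 attains ns_fan, while being
   a proper subcone of sigma1 or sigma2, contradicting minimality. *)

lemma convex_cone_hull_singleton:
  "convex_cone hull {s::'a::real_vector} = {c *\<^sub>R s | c. c \<ge> 0}"
  by (auto simp: convex_cone_hull_convex_hull_nonempty)

lemma convex_cone_hull_insert:
  "convex_cone hull (insert (s::'a::real_vector) T) =
     {c *\<^sub>R s + y | c y. c \<ge> 0 \<and> y \<in> convex_cone hull T}"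
  using convex_cone_hull_Un[of "{s}" T] by (auto simp: convex_cone_hull_singleton)

lemma irredundant_generator_face:
  fixes s :: "real ^ 'n"
  assumes sc: "strongly_convex (convex_cone hull (insert s T))"
    and irred: "s \<notin> convex_cone hull T"
  shows "(convex_cone hull {s}) face_of (convex_cone hull (insert s T))"
proof -
  let ?P = "convex_cone hull (insert s T)"
  let ?Q = "convex_cone hull T"
  let ?R = "convex_cone hull {s}"
  have QP: "?Q \<subseteq> ?P" by (simp add: hull_mono subset_insertI)
  have pointed: "z = 0" if "z \<in> ?P" "- z \<in> ?P" for z
  proof -
    have "z \<in> uminus ` ?P" using that(2) by (metis image_eqI minus_minus)
    then show ?thesis using sc that(1) unfolding strongly_convex_def by blast
  qed
  show ?thesis unfolding face_of_def
  proof (intro conjI ballI impI)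
    show "?R \<subseteq> ?P" by (simp add: hull_mono)
    show "convex ?R" by (simp add: convex_convex_cone_hull)
    fix a b x assume a: "a \<in> ?P" and b: "b \<in> ?P" and x: "x \<in> ?R"
      and seg: "x \<in> open_segment a b"
    obtain \<alpha> ya where ya: "\<alpha> \<ge> 0" "ya \<in> ?Q" "a = \<alpha> *\<^sub>R s + ya"
      using a by (auto simp: convex_cone_hull_insert)
    obtain \<beta> yb where yb: "\<beta> \<ge> 0" "yb \<in> ?Q" "b = \<beta> *\<^sub>R s + yb"
      using b by (auto simp: convex_cone_hull_insert)
    obtain e where e: "e \<ge> 0" "x = e *\<^sub>R s" using x by (auto simp: convex_cone_hull_singleton)
    obtain u where u: "0 < u" "u < 1" "x = (1 - u) *\<^sub>R a + u *\<^sub>R b"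
      using seg by (auto simp: in_segment)
    define y where "y = (1 - u) *\<^sub>R ya + u *\<^sub>R yb"
    define \<gamma> where "\<gamma> = (1 - u) * \<alpha> + u * \<beta>"
    have yQ: "y \<in> ?Q" unfolding y_def using ya yb u
      by (intro convex_cone_hull_add convex_cone_hull_mul) auto
    have eq: "e *\<^sub>R s = \<gamma> *\<^sub>R s + y"
      using u(3) e(2) ya(3) yb(3) by (simp add: y_def \<gamma>_def algebra_simps)
    text \<open>If the coefficient of s dropped, s would lie in the cone of the others.\<close>
    have "\<not> \<gamma> < e"
    proof
      assume "\<gamma> < e"
      have "(e - \<gamma>) *\<^sub>R s = y" using eq by (simp add: algebra_simps)
      then have "s = (1 / (e - \<gamma>)) *\<^sub>R y" using \<open>\<gamma> < e\<close> by auto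
      then have "s \<in> ?Q" using yQ \<open>\<gamma> < e\<close> by (simp add: convex_cone_hull_mul)
      then show False using irred by blast
    qed
    then have neg_y: "- y = (\<gamma> - e) *\<^sub>R s" and coeff: "\<gamma> - e \<ge> 0"
      using eq by (simp_all add: algebra_simps)
    have "(\<gamma> - e) *\<^sub>R s \<in> ?P"
      using coeff by (intro convex_cone_hull_mul) (auto intro: hull_inc)
    then have "- y \<in> ?P" using neg_y by simp
    then have "y = 0" using pointed yQ QP by auto
    then have "(1 - u) *\<^sub>R ya = - (u *\<^sub>R yb)" by (simp add: y_def eq_neg_iff_add_eq_0)
    moreover have "(1 - u) *\<^sub>R ya \<in> ?P" "u *\<^sub>R yb \<in> ?P"
      using ya yb u QP by (auto intro!: convex_cone_hull_mul)
    ultimately have "(1 - u) *\<^sub>R ya = 0" "u *\<^sub>R yb = 0" using pointed by (metis minus_minus)+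
    then have "ya = 0" "yb = 0" using u by auto
    then show "a \<in> ?R" "b \<in> ?R" using ya yb by (auto simp: convex_cone_hull_singleton)
  qed
qed

lemma convex_cone_hull_subset_span: "convex_cone hull (X::'a::real_vector set) \<subseteq> span X"
  by (simp add: hull_minimal span_superset subspace_imp_convex_cone)

lemma dim_convex_cone_hull_singleton:
  assumes "(s::real ^ 'n) \<noteq> 0"
  shows "dim (convex_cone hull {s}) = 1"
proof -
  have "dim (convex_cone hull {s}) \<le> dim (span {s})"
    by (rule dim_subset[OF convex_cone_hull_subset_span])
  moreover have "dim {s} \<le> dim (convex_cone hull {s})" by (rule dim_subset) (simp add: hull_inc)
  ultimately show ?thesis using assms by simp
qed

text \<open>Removing redundant generators one at a time, every remaining nonzero
  generator spans a ray; hence the rays span the cone.\<close>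

lemma convex_cone_hull_subset_span_rays:
  fixes S :: "(real ^ 'n) set"
  assumes "finite S" "strongly_convex (convex_cone hull S)"
  shows "convex_cone hull S \<subseteq> span (\<Union> (rays (convex_cone hull S)))"
  using assms
proof (induction "card S" arbitrary: S rule: less_induct)
  case less
  let ?P = "convex_cone hull S"
  show ?case
  proof (cases "\<exists>s\<in>S. s \<in> convex_cone hull (S - {s})")
    case True
    then obtain s where s: "s \<in> S" "s \<in> convex_cone hull (S - {s})" by blast
    have same_hull: "convex_cone hull (S - {s}) = ?P"
      using hull_redundant[OF s(2)] s(1) by (simp add: insert_absorb)
    have "card (S - {s}) < card S" using s(1) less.prems(1) by (metis card_Diff1_less)
    then show ?thesis using less.hyps[of "S - {s}"] less.prems same_hull by simp
  next
    case False
    have "S \<subseteq> insert 0 (\<Union> (rays ?P))"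
    proof
      fix s assume sS: "s \<in> S"
      show "s \<in> insert 0 (\<Union> (rays ?P))"
      proof (cases "s = 0")
        case nonzero: False
        have "insert s (S - {s}) = S" using sS by blast
        moreover have "s \<notin> convex_cone hull (S - {s})" using False sS by blast
        ultimately have "(convex_cone hull {s}) face_of ?P"
          using irredundant_generator_face[of s "S - {s}"] less.prems(2) by simp
        then have "convex_cone hull {s} \<in> rays ?P"
          unfolding rays_def cone_face_def using dim_convex_cone_hull_singleton[OF nonzero]
          by (simp add: convex_cone_hull_nonempty)
        moreover have "s \<in> convex_cone hull {s}" by (simp add: hull_inc)
        ultimately show ?thesis by blast
      qed simp
    qed
    then have "span S \<subseteq> span (\<Union> (rays ?P))" by (metis span_insert_0 span_mono)
    then show ?thesis using convex_cone_hull_subset_span by blast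
  qed
qed

text \<open>The excess of a family of sets: number of members minus the dimension of
  their union.  For the rays of a cone this is the non-simplicial index.\<close>

definition excess :: "(real ^ 'n) set set \<Rightarrow> int" where
  "excess F = int (card F) - int (dim (\<Union> F))"

text \<open>Grassmann: dim (X + Y) + dim (X \<inter> Y) = dim X + dim Y, in inequality form.\<close>

lemma dim_Un_plus_common_le:
  fixes X Y Z :: "(real ^ 'n) set"
  assumes "Z \<subseteq> span X \<inter> span Y"
  shows "dim (X \<union> Y) + dim Z \<le> dim X + dim Y"
proof -
  have "dim (X \<union> Y) = dim (span (X \<union> Y))" by simp
  also have "\<dots> = dim {x + y |x y. x \<in> span X \<and> y \<in> span Y}" by (simp only: span_Un)
  finally have "dim (X \<union> Y) = dim {x + y |x y. x \<in> span X \<and> y \<in> span Y}" .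
  moreover have "dim Z \<le> dim (span X \<inter> span Y)" using assms by (rule dim_subset)
  ultimately show ?thesis using dim_sums_Int[of "span X" "span Y"] by simp
qed

lemma dim_Un_Union_le:
  fixes X :: "(real ^ 'n) set" and Y :: "(real ^ 'n) set set"
  assumes "finite Y" "\<forall>\<rho>\<in>Y. dim \<rho> \<le> 1"
  shows "dim (X \<union> \<Union>Y) \<le> dim X + card Y"
  using assms
proof (induction Y rule: finite_induct)
  case (insert \<rho> Y)
  have "dim ((X \<union> \<Union>Y) \<union> \<rho>) + dim ({}::(real ^ 'n) set) \<le> dim (X \<union> \<Union>Y) + dim \<rho>"
    by (rule dim_Un_plus_common_le) simp
  moreover have "X \<union> \<Union>(insert \<rho> Y) = (X \<union> \<Union>Y) \<union> \<rho>" by blast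
  ultimately show ?case using insert by simp
qed simp

lemma excess_supermodular:
  fixes A B C :: "(real ^ 'n) set set"
  assumes "finite C" "A \<subseteq> C" "B \<subseteq> C" "\<forall>\<rho>\<in>C. dim \<rho> \<le> 1"
  shows "excess A + excess B \<le> excess (A \<inter> B) + excess C"
proof -
  have fin: "finite A" "finite B" "finite (C - (A \<union> B))"
    using assms(1-3) finite_subset by blast+
  have "\<Union>(A \<inter> B) \<subseteq> span (\<Union>A) \<inter> span (\<Union>B)" by (auto intro: span_base)
  from dim_Un_plus_common_le[OF this]
  have grassmann: "dim (\<Union>(A \<union> B)) + dim (\<Union>(A \<inter> B)) \<le> dim (\<Union>A) + dim (\<Union>B)"
    by (simp add: Union_Un_distrib)
  have "\<Union>C = \<Union>(A \<union> B) \<union> \<Union>(C - (A \<union> B))" using assms(2,3) by blast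
  moreover have "dim (\<Union>(A \<union> B) \<union> \<Union>(C - (A \<union> B))) \<le> dim (\<Union>(A \<union> B)) + card (C - (A \<union> B))"
    using fin(3) assms(4) by (intro dim_Un_Union_le) auto
  ultimately have extend: "dim (\<Union>C) \<le> dim (\<Union>(A \<union> B)) + card (C - (A \<union> B))" by simp
  have "card (C - (A \<union> B)) = card C - card (A \<union> B)" "card (A \<union> B) \<le> card C"
    using assms(1-3) fin(1,2) by (auto intro: card_Diff_subset card_mono)
  then have "card C = card (A \<union> B) + card (C - (A \<union> B))" by simp
  moreover have "card A + card B = card (A \<union> B) + card (A \<inter> B)"
    using fin(1,2) by (rule card_Un_Int)
  ultimately show ?thesis using grassmann extend unfolding excess_def by linarith
qed

text \<open>A cone of a fan has finitely many rays, and since the rays span it, its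
  non-simplicial index is the excess of its family of rays.\<close>

lemma fan_cone_rays:
  assumes "fan \<Sigma>" "\<sigma> \<in> \<Sigma>"
  shows "finite (rays \<sigma>)" "ns \<sigma> = excess (rays \<sigma>)"
proof -
  have sc: "sc_rat_poly_cone \<sigma>" using assms unfolding fan_def by blast
  obtain S where S: "finite S" "\<sigma> = convex_cone hull S"
    using sc unfolding sc_rat_poly_cone_def rat_poly_cone_def by blast
  have "rays \<sigma> \<subseteq> {F. F face_of \<sigma>}" by (auto simp: rays_def cone_face_def)
  moreover have "finite {F. F face_of \<sigma>}"
    unfolding S(2) by (rule finite_polyhedron_faces[OF polyhedron_convex_cone_hull[OF S(1)]])
  ultimately show "finite (rays \<sigma>)" by (rule finite_subset)
  have "\<sigma> \<subseteq> span (\<Union> (rays \<sigma>))"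
    using convex_cone_hull_subset_span_rays[OF S(1)] S sc by (simp add: sc_rat_poly_cone_def)
  then have "dim \<sigma> \<le> dim (\<Union> (rays \<sigma>))" by (metis dim_span dim_subset)
  moreover have "\<Union> (rays \<sigma>) \<subseteq> \<sigma>"
    by (auto simp: rays_def cone_face_def dest: face_of_imp_subset)
  then have "dim (\<Union> (rays \<sigma>)) \<le> dim \<sigma>" by (rule dim_subset)
  ultimately show "ns \<sigma> = excess (rays \<sigma>)" by (simp add: ns_def excess_def)
qed

lemma rays_mono_face:
  assumes "\<sigma> face_of \<tau>" shows "rays \<sigma> \<subseteq> rays \<tau>"
  using assms face_of_trans by (auto simp: rays_def cone_face_def)

lemma rays_common_face:
  assumes "(\<sigma>1 \<inter> \<sigma>2) face_of \<sigma>1" "(\<sigma>1 \<inter> \<sigma>2) face_of \<sigma>2"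
  shows "rays (\<sigma>1 \<inter> \<sigma>2) = rays \<sigma>1 \<inter> rays \<sigma>2"
proof
  show "rays (\<sigma>1 \<inter> \<sigma>2) \<subseteq> rays \<sigma>1 \<inter> rays \<sigma>2" using rays_mono_face assms by blast
  show "rays \<sigma>1 \<inter> rays \<sigma>2 \<subseteq> rays (\<sigma>1 \<inter> \<sigma>2)"
  proof
    fix \<rho> assume "\<rho> \<in> rays \<sigma>1 \<inter> rays \<sigma>2"
    then have \<rho>: "\<rho> face_of \<sigma>1" "\<rho> face_of \<sigma>2" "\<rho> \<noteq> {}" "dim \<rho> = 1"
      by (auto simp: rays_def cone_face_def)
    have "\<rho> face_of (\<sigma>1 \<inter> \<sigma>2)"
      using face_of_subset[OF \<rho>(1)] face_of_imp_subset[OF \<rho>(1)] face_of_imp_subset[OF \<rho>(2)]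
        face_of_imp_subset[OF assms(1)] by auto
    with \<rho> show "\<rho> \<in> rays (\<sigma>1 \<inter> \<sigma>2)" by (simp add: rays_def cone_face_def)
  qed
qed

lemma fan_ns_supermodular:
  assumes fan: "fan \<Sigma>" and cones: "\<sigma>1 \<in> \<Sigma>" "\<sigma>2 \<in> \<Sigma>" "\<tau> \<in> \<Sigma>"
    and sub: "\<sigma>1 \<subseteq> \<tau>" "\<sigma>2 \<subseteq> \<tau>"
  shows "\<sigma>1 \<inter> \<sigma>2 \<in> \<Sigma>" "ns \<sigma>1 + ns \<sigma>2 \<le> ns (\<sigma>1 \<inter> \<sigma>2) + ns \<tau>"
proof -
  have face_closed: "\<forall>\<rho>. cone_face \<rho> \<sigma> \<longrightarrow> \<rho> \<in> \<Sigma>" if "\<sigma> \<in> \<Sigma>" for \<sigma>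
    using fan that unfolding fan_def by blast
  have meet: "cone_face (\<sigma> \<inter> \<sigma>') \<sigma> \<and> cone_face (\<sigma> \<inter> \<sigma>') \<sigma>'"
    if "\<sigma> \<in> \<Sigma>" "\<sigma>' \<in> \<Sigma>" for \<sigma> \<sigma>'
    using fan that unfolding fan_def by blast
  have intersections: "(\<sigma> \<inter> \<sigma>') face_of \<sigma>" "(\<sigma> \<inter> \<sigma>') face_of \<sigma>'" "\<sigma> \<inter> \<sigma>' \<in> \<Sigma>"
    if "\<sigma> \<in> \<Sigma>" "\<sigma>' \<in> \<Sigma>" for \<sigma> \<sigma>'
    using meet[OF that] face_closed[OF that(1)] by (auto simp: cone_face_def)
  show common: "\<sigma>1 \<inter> \<sigma>2 \<in> \<Sigma>" using intersections(3)[OF cones(1,2)] .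
  have "\<sigma>1 face_of \<tau>" "\<sigma>2 face_of \<tau>"
    using intersections(2)[OF cones(1,3)] intersections(2)[OF cones(2,3)] sub
    by (simp_all add: Int_absorb2)
  then have "rays \<sigma>1 \<subseteq> rays \<tau>" "rays \<sigma>2 \<subseteq> rays \<tau>" by (simp_all add: rays_mono_face)
  moreover have "\<forall>\<rho>\<in>rays \<tau>. dim \<rho> \<le> 1" by (simp add: rays_def)
  ultimately have "excess (rays \<sigma>1) + excess (rays \<sigma>2)
      \<le> excess (rays \<sigma>1 \<inter> rays \<sigma>2) + excess (rays \<tau>)"
    using fan_cone_rays(1)[OF fan cones(3)] by (intro excess_supermodular)
  moreover have "rays (\<sigma>1 \<inter> \<sigma>2) = rays \<sigma>1 \<inter> rays \<sigma>2"
    using intersections(1,2)[OF cones(1,2)] by (rule rays_common_face)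
  ultimately show "ns \<sigma>1 + ns \<sigma>2 \<le> ns (\<sigma>1 \<inter> \<sigma>2) + ns \<tau>"
    using fan_cone_rays(2)[OF fan] cones common by simp
qed

lemma ns_le_ns_fan:
  assumes "fan \<Sigma>" "\<sigma> \<in> \<Sigma>"
  shows "ns \<sigma> \<le> ns_fan \<Sigma>"
  using assms unfolding ns_fan_def fan_def by (intro Max_ge) auto

theorem lemma3p3:
  fixes \<Sigma> :: "(real ^ 'n) set set"
  assumes "fan \<Sigma>" and "ns_fan \<Sigma> > 0"
    and "minimal_nonsimplicial \<Sigma> \<sigma>\<^sub>1" and "minimal_nonsimplicial \<Sigma> \<sigma>\<^sub>2"
    and "\<sigma>\<^sub>1 \<noteq> \<sigma>\<^sub>2"
  shows "\<not> (\<exists>\<tau>\<in>\<Sigma>. \<sigma>\<^sub>1 \<subseteq> \<tau> \<and> \<sigma>\<^sub>2 \<subseteq> \<tau>)"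
proof
  assume "\<exists>\<tau>\<in>\<Sigma>. \<sigma>\<^sub>1 \<subseteq> \<tau> \<and> \<sigma>\<^sub>2 \<subseteq> \<tau>"
  then obtain \<tau> where \<tau>: "\<tau> \<in> \<Sigma>" "\<sigma>\<^sub>1 \<subseteq> \<tau>" "\<sigma>\<^sub>2 \<subseteq> \<tau>" by blast
  have \<sigma>1: "\<sigma>\<^sub>1 \<in> \<Sigma>" "ns \<sigma>\<^sub>1 = ns_fan \<Sigma>" "\<And>\<rho>. \<rho> \<in> \<Sigma> \<Longrightarrow> \<rho> \<subset> \<sigma>\<^sub>1 \<Longrightarrow> ns \<rho> \<noteq> ns_fan \<Sigma>"
    using assms(3) unfolding minimal_nonsimplicial_def by blast+
  have \<sigma>2: "\<sigma>\<^sub>2 \<in> \<Sigma>" "ns \<sigma>\<^sub>2 = ns_fan \<Sigma>" "\<And>\<rho>. \<rho> \<in> \<Sigma> \<Longrightarrow> \<rho> \<subset> \<sigma>\<^sub>2 \<Longrightarrow> ns \<rho> \<noteq> ns_fan \<Sigma>"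
    using assms(4) unfolding minimal_nonsimplicial_def by blast+
  note common = fan_ns_supermodular[OF assms(1) \<sigma>1(1) \<sigma>2(1) \<tau>]
  have "ns \<tau> \<le> ns_fan \<Sigma>" "ns (\<sigma>\<^sub>1 \<inter> \<sigma>\<^sub>2) \<le> ns_fan \<Sigma>"
    using ns_le_ns_fan[OF assms(1)] \<tau>(1) common(1) by blast+
  then have "ns (\<sigma>\<^sub>1 \<inter> \<sigma>\<^sub>2) = ns_fan \<Sigma>" using common(2) \<sigma>1(2) \<sigma>2(2) by linarith
  moreover have "\<sigma>\<^sub>1 \<inter> \<sigma>\<^sub>2 \<subset> \<sigma>\<^sub>1 \<or> \<sigma>\<^sub>1 \<inter> \<sigma>\<^sub>2 \<subset> \<sigma>\<^sub>2" using assms(5) by blast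
  ultimately show False using \<sigma>1(3) \<sigma>2(3) common(1) by blast
qed

end
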